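(* For each $p\ge1$ let $\theta=\theta^{(p)},w=w^{(p)}\in\mathbb{R}^p$ (possibly random), $\eta=\theta+w$, and let $\hat\nu=\hat\nu_p$ be an estimator. Suppose there are constants $m\in\mathbb{R}$ and $\nu,\xi\in(0,\infty)$ such that, as $p\to\infty$ (almost surely in the random case): (i) $\bar\theta\to m$ and $\mathrm{var}(\theta)\to\xi^2$; (ii) $\bar w\to0$ and $\mathrm{var}(w)\to\nu^2$; (iii) $\mathrm{cov}(\theta,w)\to0$; (iv) $\hat\nu_p\to\nu$. Let $$\mathrm{SNR}=\frac{\xi}{\nu},\quad r_\infty=\frac1{\sqrt{1+(m/\xi)^2}},\quad c_\infty=\frac{\mathrm{SNR}^2}{1+\mathrm{SNR}^2},\quad d_\infty=c_\infty+\frac{r_\infty^2}{1+\mathrm{SNR}^2}.$$ Let $c=1-\hat\nu^2/\mathrm{var}(\eta)$ and $\eta(c)=\bar\eta+c(\eta-\bar\eta)$. Then $$\mathrm{MSE}_\infty(\eta(c),\theta)=c_\infty\,\mathrm{MSE}_\infty(\eta,\theta)\quad\text{and}\quad \mathrm{SPH}_\infty(\eta(c),\theta)=d_\infty\,\mathrm{SPH}_\infty(\eta,\theta),$$ where the subscript $\infty$ denotes the (almost sure) limit as $p\to\infty$. Moreover, the quantities $c^{\mathrm{MSE}}=\mathrm{cov}(\theta,\eta)/\mathrm{var}(\eta)$ and $c^{\mathrm{SPH}}=(\bar\eta/\bar\theta)\,c^{\mathrm{MSE}}$ converge to $c_\infty$ as $p\to\infty$.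
   Context: For $u,v\in\mathbb{R}^p$: $\bar u=\frac1p\sum_i u_i$, $\mathrm{var}(u)=\frac1p\sum_i(u_i-\bar u)^2$, $\mathrm{cov}(u,v)=\frac1p\sum_i(u_i-\bar u)(v_i-\bar v)$; for $x\in\mathbb{R}$, $u-x$ and $x+u$ are componentwise. $\mathrm{MSE}_p(u,\theta)=\langle u-\theta,u-\theta\rangle/p$ and, for nonzero $u,\theta$, $\mathrm{SPH}_p(u,\theta)=1-\left(\frac{\langle u,\theta\rangle}{|u||\theta|}\right)^2$. The quantities $c^{\mathrm{MSE}}$ and $c^{\mathrm{SPH}}$ are the minimizers over $c$ of $\mathrm{MSE}_p(\eta(c),\theta)$ and $\mathrm{SPH}_p(\eta(c),\theta)$ respectively. *)

theory Defs
  imports "HOL-Analysis.Analysis"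
begin

text \<open>Vectors in R^p are represented as functions nat => real, only the
  coordinates 0..p-1 being relevant.\<close>

definition vmean :: "nat \<Rightarrow> (nat \<Rightarrow> real) \<Rightarrow> real" where
  "vmean p u = (\<Sum>i<p. u i) / real p"

definition vvar :: "nat \<Rightarrow> (nat \<Rightarrow> real) \<Rightarrow> real" where
  "vvar p u = (\<Sum>i<p. (u i - vmean p u)^2) / real p"

definition vcov :: "nat \<Rightarrow> (nat \<Rightarrow> real) \<Rightarrow> (nat \<Rightarrow> real) \<Rightarrow> real" where
  "vcov p u v = (\<Sum>i<p. (u i - vmean p u) * (v i - vmean p v)) / real p"

definition vinner :: "nat \<Rightarrow> (nat \<Rightarrow> real) \<Rightarrow> (nat \<Rightarrow> real) \<Rightarrow> real" where
  "vinner p u v = (\<Sum>i<p. u i * v i)"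

definition vnorm :: "nat \<Rightarrow> (nat \<Rightarrow> real) \<Rightarrow> real" where
  "vnorm p u = sqrt (vinner p u u)"

definition MSE :: "nat \<Rightarrow> (nat \<Rightarrow> real) \<Rightarrow> (nat \<Rightarrow> real) \<Rightarrow> real" where
  "MSE p u \<theta> = vinner p (\<lambda>i. u i - \<theta> i) (\<lambda>i. u i - \<theta> i) / real p"

definition SPH :: "nat \<Rightarrow> (nat \<Rightarrow> real) \<Rightarrow> (nat \<Rightarrow> real) \<Rightarrow> real" where
  "SPH p u \<theta> = 1 - (vinner p u \<theta> / (vnorm p u * vnorm p \<theta>))^2"

definition shrink :: "nat \<Rightarrow> real \<Rightarrow> (nat \<Rightarrow> real) \<Rightarrow> (nat \<Rightarrow> real)" where
  "shrink p c u = (\<lambda>i. vmean p u + c * (u i - vmean p u))"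

definition SNR :: "real \<Rightarrow> real \<Rightarrow> real" where
  "SNR \<xi> \<nu> = \<xi> / \<nu>"

definition r_inf :: "real \<Rightarrow> real \<Rightarrow> real" where
  "r_inf m \<xi> = 1 / sqrt (1 + (m / \<xi>)^2)"

definition c_inf :: "real \<Rightarrow> real \<Rightarrow> real" where
  "c_inf \<xi> \<nu> = (SNR \<xi> \<nu>)^2 / (1 + (SNR \<xi> \<nu>)^2)"

definition d_inf :: "real \<Rightarrow> real \<Rightarrow> real \<Rightarrow> real" where
  "d_inf m \<xi> \<nu> = c_inf \<xi> \<nu> + (r_inf m \<xi>)^2 / (1 + (SNR \<xi> \<nu>)^2)"

end

theory Submission
  imports Defs
begin

(* MSE, SPH and the coefficients cMSE, cSPH are rational functions of the empirical means,
   variances and covariance of \<eta> and \<theta>, and the shrinkage \<eta>(c) keeps the mean of \<eta>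
   while multiplying its covariances by c.  Hence all of them converge to the same functions
   of the limiting moments: mean m for both vectors, var \<eta> = \<xi>^2 + \<nu>^2,
   cov(\<eta>, \<theta>) = var \<theta> = \<xi>^2, and c = c_inf.  What remains is algebra, driven by
   the identity c_inf (\<xi>^2 + \<nu>^2) = \<xi>^2 saying that c_inf is the MSE-optimal coefficient. *)

(* With the junk value x / 0 = 0 every empirical moment of the empty vector is 0, which
   makes the moment identities below hold without the hypothesis p > 0. *)

lemma vmean_dim_0 [simp]: "vmean 0 u = 0"
  by (simp add: vmean_def)

lemma vcov_dim_0 [simp]: "vcov 0 u v = 0"
  by (simp add: vcov_def)

lemma vmean_add: "vmean p (\<lambda>i. u i + v i) = vmean p u + vmean p v"
  by (simp add: vmean_def sum.distrib add_divide_distrib)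

lemma vmean_diff: "vmean p (\<lambda>i. u i - v i) = vmean p u - vmean p v"
  by (simp add: vmean_def sum_subtractf diff_divide_distrib)

lemma vmean_shrink: "vmean p (shrink p c u) = vmean p u"
proof (cases "p = 0")
  case True
  then show ?thesis by simp
next
  case False
  then have "(\<Sum>i<p. u i - vmean p u) = 0"
    by (simp add: sum_subtractf vmean_def)
  then show ?thesis
    using False by (simp add: vmean_def shrink_def sum.distrib flip: sum_distrib_left)
qed

lemma shrink_one: "shrink p 1 u = u"
  by (simp add: shrink_def)

lemma vcov_commute: "vcov p u v = vcov p v u"
  by (simp add: vcov_def mult.commute)

lemma vvar_eq_vcov: "vvar p u = vcov p u u"
  by (simp add: vvar_def vcov_def power2_eq_square)

lemma vcov_add_left: "vcov p (\<lambda>i. u i + v i) z = vcov p u z + vcov p v z"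
  unfolding vcov_def vmean_add
  by (simp add: ring_distribs sum.distrib add_divide_distrib add_diff_add)

lemma vcov_diff_left: "vcov p (\<lambda>i. u i - v i) z = vcov p u z - vcov p v z"
proof -
  have "(\<Sum>i<p. (u i - v i - vmean p (\<lambda>i. u i - v i)) * (z i - vmean p z))
     = (\<Sum>i<p. (u i - vmean p u) * (z i - vmean p z) - (v i - vmean p v) * (z i - vmean p z))"
    by (intro sum.cong) (auto simp: vmean_diff algebra_simps)
  then show ?thesis by (simp add: vcov_def sum_subtractf diff_divide_distrib)
qed

lemma vcov_shrink_left: "vcov p (shrink p c u) v = c * vcov p u v"
  unfolding vcov_def vmean_shrink by (simp add: shrink_def sum_distrib_left mult.assoc)

lemma vvar_diff: "vvar p (\<lambda>i. u i - v i) = vvar p u - 2 * vcov p u v + vvar p v"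
  by (simp add: vvar_eq_vcov vcov_diff_left vcov_commute[of p _ "\<lambda>i. u i - v i"]
      vcov_commute[of p v u])

lemma vinner_eq_moments:
  "vinner p u v = real p * (vmean p u * vmean p v + vcov p u v)"
proof (cases "p = 0")
  case True
  then show ?thesis by (simp add: vinner_def)
next
  case False
  have "(\<Sum>i<p. (u i - vmean p u) * (v i - vmean p v))
     = (\<Sum>i<p. u i * v i) - vmean p v * (\<Sum>i<p. u i) - vmean p u * (\<Sum>i<p. v i)
       + real p * vmean p u * vmean p v"
    by (simp add: algebra_simps sum.distrib sum_subtractf sum_distrib_left)
  with False show ?thesis by (simp add: vcov_def vinner_def vmean_def field_simps)
qed

lemma MSE_eq_moments:
  "MSE p u t = (vmean p u - vmean p t)^2 + vvar p u - 2 * vcov p u t + vvar p t"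
proof -
  have "MSE p u t = (vmean p u - vmean p t)^2 + vvar p (\<lambda>i. u i - t i)"
    by (cases "p = 0") (simp_all add: MSE_def vinner_eq_moments vmean_diff vvar_eq_vcov power2_eq_square)
  then show ?thesis by (simp add: vvar_diff)
qed

lemma SPH_eq_moments:
  "SPH p u t = 1 - (vmean p u * vmean p t + vcov p u t)^2 /
     ((vmean p u ^ 2 + vvar p u) * (vmean p t ^ 2 + vvar p t))"
proof -
  have "SPH p u t = 1 - (vinner p u t)^2 / (vinner p u u * vinner p t t)"
    by (simp add: SPH_def vnorm_def power_divide power_mult_distrib vinner_def sum_nonneg)
  then show ?thesis
    by (cases "p = 0") (simp_all add: vinner_eq_moments vvar_eq_vcov power_mult_distrib power2_eq_square)
qed

lemma MSE_shrink:
  "MSE p (shrink p c u) t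
     = (vmean p u - vmean p t)^2 + c^2 * vvar p u - 2 * c * vcov p u t + vvar p t"
  by (simp add: MSE_eq_moments vmean_shrink vvar_eq_vcov vcov_shrink_left
      vcov_commute[of p u "shrink p c u"] power2_eq_square)

lemma SPH_shrink:
  "SPH p (shrink p c u) t = 1 - (vmean p u * vmean p t + c * vcov p u t)^2 /
     ((vmean p u ^ 2 + c^2 * vvar p u) * (vmean p t ^ 2 + vvar p t))"
  by (simp add: SPH_eq_moments vmean_shrink vvar_eq_vcov vcov_shrink_left
      vcov_commute[of p u "shrink p c u"] power2_eq_square)

lemma tendsto_MSE_shrink:
  assumes "(\<lambda>p. vmean p (u p)) \<longlonglongrightarrow> \<mu>" and "(\<lambda>p. vmean p (t p)) \<longlonglongrightarrow> \<tau>"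
    and "(\<lambda>p. vvar p (u p)) \<longlonglongrightarrow> U" and "(\<lambda>p. vvar p (t p)) \<longlonglongrightarrow> V"
    and "(\<lambda>p. vcov p (u p) (t p)) \<longlonglongrightarrow> K" and "c \<longlonglongrightarrow> \<gamma>"
  shows "(\<lambda>p. MSE p (shrink p (c p) (u p)) (t p)) \<longlonglongrightarrow> (\<mu> - \<tau>)^2 + \<gamma>^2 * U - 2 * \<gamma> * K + V"
  unfolding MSE_shrink using assms by (intro tendsto_intros)

lemma tendsto_SPH_shrink:
  assumes "(\<lambda>p. vmean p (u p)) \<longlonglongrightarrow> \<mu>" and "(\<lambda>p. vmean p (t p)) \<longlonglongrightarrow> \<tau>"
    and "(\<lambda>p. vvar p (u p)) \<longlonglongrightarrow> U" and "(\<lambda>p. vvar p (t p)) \<longlonglongrightarrow> V"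
    and "(\<lambda>p. vcov p (u p) (t p)) \<longlonglongrightarrow> K" and "c \<longlonglongrightarrow> \<gamma>"
    and "(\<mu>^2 + \<gamma>^2 * U) * (\<tau>^2 + V) \<noteq> 0"
  shows "(\<lambda>p. SPH p (shrink p (c p) (u p)) (t p))
    \<longlonglongrightarrow> 1 - (\<mu> * \<tau> + \<gamma> * K)^2 / ((\<mu>^2 + \<gamma>^2 * U) * (\<tau>^2 + V))"
  unfolding SPH_shrink using assms by (intro tendsto_intros)

lemma tendsto_moments_add:
  assumes "(\<lambda>p. vmean p (u p)) \<longlonglongrightarrow> \<mu>" and "(\<lambda>p. vmean p (v p)) \<longlonglongrightarrow> \<mu>'"
    and "(\<lambda>p. vvar p (u p)) \<longlonglongrightarrow> U" and "(\<lambda>p. vvar p (v p)) \<longlonglongrightarrow> V"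
    and "(\<lambda>p. vcov p (u p) (v p)) \<longlonglongrightarrow> K"
  shows "(\<lambda>p. vmean p (\<lambda>i. u p i + v p i)) \<longlonglongrightarrow> \<mu> + \<mu>'"
    and "(\<lambda>p. vvar p (\<lambda>i. u p i + v p i)) \<longlonglongrightarrow> U + 2 * K + V"
    and "(\<lambda>p. vcov p (\<lambda>i. u p i + v p i) (u p)) \<longlonglongrightarrow> U + K"
proof -
  have "vvar p (\<lambda>i. u p i + v p i) = vvar p (u p) + 2 * vcov p (u p) (v p) + vvar p (v p)" for p
    by (simp add: vvar_eq_vcov vcov_add_left vcov_commute[of p _ "\<lambda>i. u p i + v p i"]
        vcov_commute[of p "v p" "u p"])
  then show "(\<lambda>p. vvar p (\<lambda>i. u p i + v p i)) \<longlonglongrightarrow> U + 2 * K + V"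
    using assms by (auto intro!: tendsto_eq_intros)
  show "(\<lambda>p. vmean p (\<lambda>i. u p i + v p i)) \<longlonglongrightarrow> \<mu> + \<mu>'"
    using assms by (simp add: vmean_add tendsto_add)
  show "(\<lambda>p. vcov p (\<lambda>i. u p i + v p i) (u p)) \<longlonglongrightarrow> U + K"
    unfolding vcov_add_left vvar_eq_vcov[symmetric] using assms(3,5)
    by (simp add: vcov_commute[of p "v p" "u p" for p] tendsto_add)
qed

lemma c_inf_eq: "\<nu> \<noteq> 0 \<Longrightarrow> c_inf \<xi> \<nu> = \<xi>^2 / (\<xi>^2 + \<nu>^2)"
  by (simp add: c_inf_def SNR_def field_simps)

lemma d_inf_eq:
  assumes "\<xi> \<noteq> 0" and "\<nu> \<noteq> 0"
  shows "d_inf m \<xi> \<nu> = c_inf \<xi> \<nu> * (m^2 + \<xi>^2 + \<nu>^2) / (m^2 + \<xi>^2)"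
proof -
  have pos: "m^2 + \<xi>^2 > 0" "\<xi>^2 + \<nu>^2 > 0"
    using assms by (simp_all add: add_nonneg_pos add_pos_pos)
  have r: "(r_inf m \<xi>)^2 = \<xi>^2 / (m^2 + \<xi>^2)"
    using assms pos by (simp add: r_inf_def divide_simps)
  have snr: "1 + (SNR \<xi> \<nu>)^2 = (\<xi>^2 + \<nu>^2) / \<nu>^2"
    using assms by (simp add: SNR_def divide_simps)
  have "x / S + x / A / (S / n) = x / S * (A + n) / A"
    if "A \<noteq> 0" "S \<noteq> 0" "n \<noteq> 0" for x A S n :: real
    using that by (simp add: field_simps)
  from this[of "m^2 + \<xi>^2" "\<xi>^2 + \<nu>^2" "\<nu>^2" "\<xi>^2"] show ?thesis
    unfolding d_inf_def r snr c_inf_eq[OF assms(2)] using assms pos by (simp add: add.assoc)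
qed

lemma tendsto_shrinkage_coefficient:
  assumes "(\<lambda>p. vvar p (u p)) \<longlonglongrightarrow> \<xi>^2 + \<nu>^2" and "\<nu>hat \<longlonglongrightarrow> \<nu>" and "\<nu> \<noteq> 0"
  shows "(\<lambda>p. 1 - (\<nu>hat p)^2 / vvar p (u p)) \<longlonglongrightarrow> c_inf \<xi> \<nu>"
proof -
  have S: "\<xi>^2 + \<nu>^2 > 0"
    using assms(3) by (simp add: add_nonneg_pos)
  have "(\<lambda>p. 1 - (\<nu>hat p)^2 / vvar p (u p)) \<longlonglongrightarrow> 1 - \<nu>^2 / (\<xi>^2 + \<nu>^2)"
    using assms(1,2) S by (intro tendsto_intros) auto
  also have "1 - \<nu>^2 / (\<xi>^2 + \<nu>^2) = c_inf \<xi> \<nu>"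
    using assms(3) S by (simp add: c_inf_eq diff_divide_eq_iff)
  finally show ?thesis .
qed

lemma one_minus_square_div_eq:
  fixes a b :: real
  assumes "a \<noteq> 0" and "b \<noteq> 0"
  shows "1 - b^2 / (a * b) = (a - b) / a"
  using assms by (simp add: field_simps power2_eq_square)

lemma tendsto_risks:
  assumes "(\<lambda>p. vmean p (u p)) \<longlonglongrightarrow> m" and "(\<lambda>p. vmean p (t p)) \<longlonglongrightarrow> m"
    and "(\<lambda>p. vvar p (u p)) \<longlonglongrightarrow> \<xi>^2 + \<nu>^2" and "(\<lambda>p. vvar p (t p)) \<longlonglongrightarrow> \<xi>^2"
    and "(\<lambda>p. vcov p (u p) (t p)) \<longlonglongrightarrow> \<xi>^2"
    and "\<xi> \<noteq> 0" and "\<nu> \<noteq> 0"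
  shows "(\<lambda>p. MSE p (u p) (t p)) \<longlonglongrightarrow> \<nu>^2"
    and "(\<lambda>p. SPH p (u p) (t p)) \<longlonglongrightarrow> \<nu>^2 / (m^2 + \<xi>^2 + \<nu>^2)"
proof -
  note limits = tendsto_MSE_shrink[OF assms(1-5) tendsto_const[of 1]]
    tendsto_SPH_shrink[OF assms(1-5) tendsto_const[of 1]]
  have A: "m^2 + \<xi>^2 > 0" and mS: "m^2 + (\<xi>^2 + \<nu>^2) > 0"
    using assms(6,7) by (simp_all add: add_nonneg_pos add_pos_pos)
  show "(\<lambda>p. MSE p (u p) (t p)) \<longlonglongrightarrow> \<nu>^2"
    using limits(1) by (simp add: shrink_one)
  have "(\<lambda>p. SPH p (u p) (t p)) \<longlonglongrightarrow> 1 - (m^2 + \<xi>^2)^2 / ((m^2 + (\<xi>^2 + \<nu>^2)) * (m^2 + \<xi>^2))"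
    using limits(2) A mS by (simp add: shrink_one power2_eq_square[of m])
  also have "1 - (m^2 + \<xi>^2)^2 / ((m^2 + (\<xi>^2 + \<nu>^2)) * (m^2 + \<xi>^2)) = \<nu>^2 / (m^2 + \<xi>^2 + \<nu>^2)"
    using A mS assms(6) by (subst one_minus_square_div_eq) (simp_all add: add.assoc)
  finally show "(\<lambda>p. SPH p (u p) (t p)) \<longlonglongrightarrow> \<nu>^2 / (m^2 + \<xi>^2 + \<nu>^2)" .
qed

lemma tendsto_risks_shrink:
  assumes "(\<lambda>p. vmean p (u p)) \<longlonglongrightarrow> m" and "(\<lambda>p. vmean p (t p)) \<longlonglongrightarrow> m"
    and "(\<lambda>p. vvar p (u p)) \<longlonglongrightarrow> \<xi>^2 + \<nu>^2" and "(\<lambda>p. vvar p (t p)) \<longlonglongrightarrow> \<xi>^2"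
    and "(\<lambda>p. vcov p (u p) (t p)) \<longlonglongrightarrow> \<xi>^2"
    and "c \<longlonglongrightarrow> c_inf \<xi> \<nu>"
    and "\<xi> \<noteq> 0" and "\<nu> \<noteq> 0"
  shows "(\<lambda>p. MSE p (shrink p (c p) (u p)) (t p)) \<longlonglongrightarrow> c_inf \<xi> \<nu> * \<nu>^2"
    and "(\<lambda>p. SPH p (shrink p (c p) (u p)) (t p)) \<longlonglongrightarrow> c_inf \<xi> \<nu> * \<nu>^2 / (m^2 + \<xi>^2)"
proof -
  define \<gamma> where "\<gamma> = c_inf \<xi> \<nu>"
  have S: "\<xi>^2 + \<nu>^2 > 0" and A: "m^2 + \<xi>^2 > 0"
    using assms(7,8) by (simp_all add: add_nonneg_pos add_pos_pos)
  have \<gamma>_S: "\<gamma> * (\<xi>^2 + \<nu>^2) = \<xi>^2" and \<gamma>_pos: "\<gamma> > 0"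
    using S assms(7,8) by (simp_all add: \<gamma>_def c_inf_eq)
  have \<gamma>2_S: "\<gamma>^2 * (\<xi>^2 + \<nu>^2) = \<gamma> * \<xi>^2"
    using \<gamma>_S by (metis mult.assoc power2_eq_square)
  moreover have "\<gamma> * \<nu>^2 = \<xi>^2 - \<gamma> * \<xi>^2"
    using \<gamma>_S by (simp add: algebra_simps)
  ultimately have "\<gamma>^2 * (\<xi>^2 + \<nu>^2) - 2 * \<gamma> * \<xi>^2 + \<xi>^2 = \<gamma> * \<nu>^2"
    by simp
  then show "(\<lambda>p. MSE p (shrink p (c p) (u p)) (t p)) \<longlonglongrightarrow> c_inf \<xi> \<nu> * \<nu>^2"
    using tendsto_MSE_shrink[OF assms(1-6)] by (simp add: \<gamma>_def)
  define B where "B = m^2 + \<gamma> * \<xi>^2"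
  have B: "m * m + \<gamma> * \<xi>^2 = B" "m^2 + \<gamma>^2 * (\<xi>^2 + \<nu>^2) = B" "B > 0"
    using \<gamma>2_S \<gamma>_pos assms(7) by (simp_all add: B_def power2_eq_square[of m] add_nonneg_pos)
  have "(\<lambda>p. SPH p (shrink p (c p) (u p)) (t p)) \<longlonglongrightarrow> 1 - B^2 / ((m^2 + \<xi>^2) * B)"
    using tendsto_SPH_shrink[OF assms(1-6)] A B assms(7) by (simp add: \<gamma>_def mult.commute)
  also have "1 - B^2 / ((m^2 + \<xi>^2) * B) = \<gamma> * \<nu>^2 / (m^2 + \<xi>^2)"
    using A B \<gamma>_S assms(7) by (subst one_minus_square_div_eq) (simp_all add: B_def algebra_simps)
  finally show "(\<lambda>p. SPH p (shrink p (c p) (u p)) (t p)) \<longlonglongrightarrow> c_inf \<xi> \<nu> * \<nu>^2 / (m^2 + \<xi>^2)"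
    by (simp add: \<gamma>_def)
qed

theorem proposition3:
  fixes \<theta> w :: "nat \<Rightarrow> nat \<Rightarrow> real" and \<nu>hat :: "nat \<Rightarrow> real"
    and m \<nu> \<xi> :: real
  assumes "\<nu> > 0" and "\<xi> > 0"
    and "(\<lambda>p. vmean p (\<theta> p)) \<longlonglongrightarrow> m"
    and "(\<lambda>p. vvar p (\<theta> p)) \<longlonglongrightarrow> \<xi>^2"
    and "(\<lambda>p. vmean p (w p)) \<longlonglongrightarrow> 0"
    and "(\<lambda>p. vvar p (w p)) \<longlonglongrightarrow> \<nu>^2"
    and "(\<lambda>p. vcov p (\<theta> p) (w p)) \<longlonglongrightarrow> 0"
    and "\<nu>hat \<longlonglongrightarrow> \<nu>"
  shows
    "let \<eta> = (\<lambda>p i. \<theta> p i + w p i);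
         c = (\<lambda>p. 1 - (\<nu>hat p)^2 / vvar p (\<eta> p));
         cMSE = (\<lambda>p. vcov p (\<theta> p) (\<eta> p) / vvar p (\<eta> p));
         cSPH = (\<lambda>p. (vmean p (\<eta> p) / vmean p (\<theta> p)) * cMSE p)
     in (\<exists>L. (\<lambda>p. MSE p (\<eta> p) (\<theta> p)) \<longlonglongrightarrow> L \<and>
              (\<lambda>p. MSE p (shrink p (c p) (\<eta> p)) (\<theta> p)) \<longlonglongrightarrow> c_inf \<xi> \<nu> * L)
      \<and> (\<exists>L. (\<lambda>p. SPH p (\<eta> p) (\<theta> p)) \<longlonglongrightarrow> L \<and>
              (\<lambda>p. SPH p (shrink p (c p) (\<eta> p)) (\<theta> p)) \<longlonglongrightarrow> d_inf m \<xi> \<nu> * L)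
      \<and> cMSE \<longlonglongrightarrow> c_inf \<xi> \<nu>
      \<and> (m \<noteq> 0 \<longrightarrow> cSPH \<longlonglongrightarrow> c_inf \<xi> \<nu>)"
proof -
  define \<eta> where "\<eta> = (\<lambda>p i. \<theta> p i + w p i)"
  define c where "c = (\<lambda>p. 1 - (\<nu>hat p)^2 / vvar p (\<eta> p))"
  have S: "\<xi>^2 + \<nu>^2 > 0" and mS: "m^2 + \<xi>^2 + \<nu>^2 > 0"
    using assms(1) by (simp_all add: add_nonneg_pos)
  have mean_\<eta>: "(\<lambda>p. vmean p (\<eta> p)) \<longlonglongrightarrow> m"
    and var_\<eta>: "(\<lambda>p. vvar p (\<eta> p)) \<longlonglongrightarrow> \<xi>^2 + \<nu>^2"
    and cov_\<eta>_\<theta>: "(\<lambda>p. vcov p (\<eta> p) (\<theta> p)) \<longlonglongrightarrow> \<xi>^2"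
    using tendsto_moments_add[OF assms(3,5,4,6,7)] by (simp_all add: \<eta>_def)
  note moments = mean_\<eta> assms(3) var_\<eta> assms(4) cov_\<eta>_\<theta>
  have c: "c \<longlonglongrightarrow> c_inf \<xi> \<nu>"
    unfolding c_def using tendsto_shrinkage_coefficient[OF var_\<eta> assms(8)] assms(1) by simp
  have cMSE: "(\<lambda>p. vcov p (\<theta> p) (\<eta> p) / vvar p (\<eta> p)) \<longlonglongrightarrow> c_inf \<xi> \<nu>"
    using tendsto_divide[OF cov_\<eta>_\<theta> var_\<eta>] S assms(1) by (simp add: c_inf_eq vcov_commute)
  have cSPH: "(\<lambda>p. vmean p (\<eta> p) / vmean p (\<theta> p) * (vcov p (\<theta> p) (\<eta> p) / vvar p (\<eta> p)))
      \<longlonglongrightarrow> c_inf \<xi> \<nu>" if "m \<noteq> 0"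
    using tendsto_mult[OF tendsto_divide[OF mean_\<eta> assms(3) that] cMSE] that by simp
  have "d_inf m \<xi> \<nu> * (\<nu>^2 / (m^2 + \<xi>^2 + \<nu>^2)) = c_inf \<xi> \<nu> * \<nu>^2 / (m^2 + \<xi>^2)"
    using assms(1,2) mS by (simp add: d_inf_eq)
  then show ?thesis
    using tendsto_risks[OF moments] tendsto_risks_shrink[OF moments c] cMSE cSPH assms(1,2)
    unfolding Let_def \<eta>_def c_def by auto
qed

end
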